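(* Let $n\geq 2$ and let $c_0:V(K_n)\to\mathbb{Z}$ be any initial chip configuration on the complete graph $K_n$. Then the sequence of configurations $(c_t)_{t\ge0}$ produced by the diffusion process is eventually periodic, i.e. there exist $t\geq 0$ and $p\geq 1$ with $c_{t+p}=c_t$.
   Context: Diffusion process: for a finite simple graph $G$ and a chip configuration $c_t:V(G)\to\mathbb{Z}$ (negative values allowed), the next configuration is defined simultaneously for every vertex $u$ by $c_{t+1}(u)=c_t(u)-|\{w\in N(u): c_t(u)>c_t(w)\}|+|\{w\in N(u): c_t(u)<c_t(w)\}|$. *)

theory Defs
  imports Main
begin

definition simple_graph :: "'a set \<Rightarrow> ('a \<Rightarrow> 'a \<Rightarrow> bool) \<Rightarrow> bool" where
  "simple_graph V E \<longleftrightarrow> finite V \<and> (\<forall>u w. E u w \<longrightarrow> E w u) \<and> (\<forall>u. \<not> E u u)"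

definition nbhd :: "'a set \<Rightarrow> ('a \<Rightarrow> 'a \<Rightarrow> bool) \<Rightarrow> 'a \<Rightarrow> 'a set" where
  "nbhd V E u = {w \<in> V. E u w}"

definition diffusion_step :: "'a set \<Rightarrow> ('a \<Rightarrow> 'a \<Rightarrow> bool) \<Rightarrow> ('a \<Rightarrow> int) \<Rightarrow> ('a \<Rightarrow> int)" where
  "diffusion_step V E c = (\<lambda>u. if u \<in> V then
      c u - int (card {w \<in> nbhd V E u. c u > c w}) + int (card {w \<in> nbhd V E u. c u < c w})
    else c u)"

definition diffusion :: "'a set \<Rightarrow> ('a \<Rightarrow> 'a \<Rightarrow> bool) \<Rightarrow> ('a \<Rightarrow> int) \<Rightarrow> nat \<Rightarrow> ('a \<Rightarrow> int)" where
  "diffusion V E c0 t = (diffusion_step V E ^^ t) c0"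

definition Kn_vertices :: "nat \<Rightarrow> nat set" where
  "Kn_vertices n = {0..<n}"

definition Kn_edge :: "nat \<Rightarrow> nat \<Rightarrow> bool" where
  "Kn_edge u w \<longleftrightarrow> u \<noteq> w"

end

theory Submission
  imports Defs "HOL-Library.FuncSet"
begin

text \<open>On any graph the diffusion step preserves the total number of chips, since each
  transfer along an edge moves one chip from one end to the other. On the complete graph
  \<open>K\<^sub>n\<close>, if \<open>c u < c v\<close> then \<open>v\<close> has strictly more poorer and strictly fewer richer
  vertices than \<open>u\<close>, while each of these counts is at most \<open>n - 1\<close>; so one step shrinks
  the gap \<open>c v - c u\<close> by at least 2 and at most \<open>2(n - 1)\<close>. Hence a bound
  \<open>D \<ge> 2(n - 1)\<close> on all pairwise differences is preserved. Bounded differences and a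
  fixed total bound every chip count, so only finitely many configurations occur and the
  sequence must revisit one of them. The argument works for every \<open>n\<close>.\<close>

definition spread_le :: "'a set \<Rightarrow> ('a \<Rightarrow> int) \<Rightarrow> int \<Rightarrow> bool" where
  "spread_le V c D \<longleftrightarrow> (\<forall>u\<in>V. \<forall>v\<in>V. \<bar>c u - c v\<bar> \<le> D)"

lemma diffusion_Suc: "diffusion V E c0 (Suc t) = diffusion_step V E (diffusion V E c0 t)"
  by (simp add: diffusion_def)

lemma int_card_nbhd_filter:
  assumes "finite V"
  shows "int (card {w \<in> nbhd V E u. P w}) = (\<Sum>w\<in>V. if E u w \<and> P w then 1 else 0)"
proof -
  have "int (card {w \<in> nbhd V E u. P w}) = (\<Sum>w\<in>{w \<in> V. E u w \<and> P w}. 1)"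
    by (simp add: nbhd_def conj_assoc)
  also have "\<dots> = (\<Sum>w\<in>V. if E u w \<and> P w then 1 else 0)"
    using assms by (rule sum.inter_filter)
  finally show ?thesis .
qed

lemma sum_diffusion_step:
  assumes "simple_graph V E"
  shows "(\<Sum>u\<in>V. diffusion_step V E c u) = (\<Sum>u\<in>V. c u)"
proof -
  have fin: "finite V" and sym: "\<And>u w. E u w \<longleftrightarrow> E w u"
    using assms unfolding simple_graph_def by blast+
  let ?out = "\<lambda>u. int (card {w \<in> nbhd V E u. c u > c w})"
  let ?in = "\<lambda>u. int (card {w \<in> nbhd V E u. c u < c w})"
  have "(\<Sum>u\<in>V. ?out u) = (\<Sum>u\<in>V. \<Sum>w\<in>V. if E u w \<and> c w < c u then 1 else 0)"
    using fin by (simp add: int_card_nbhd_filter)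
  also have "\<dots> = (\<Sum>w\<in>V. \<Sum>u\<in>V. if E w u \<and> c w < c u then 1 else 0)"
    by (subst sum.swap) (simp add: sym)
  also have "\<dots> = (\<Sum>u\<in>V. ?in u)"
    using fin by (simp add: int_card_nbhd_filter)
  finally have "(\<Sum>u\<in>V. ?out u) = (\<Sum>u\<in>V. ?in u)" .
  moreover have "(\<Sum>u\<in>V. diffusion_step V E c u) = (\<Sum>u\<in>V. c u - ?out u + ?in u)"
    by (rule sum.cong) (simp_all add: diffusion_step_def)
  ultimately show ?thesis
    by (simp add: sum.distrib sum_subtractf)
qed

lemma diffusion_step_complete:
  assumes "u \<in> V"
  shows "diffusion_step V Kn_edge c u =
    c u - int (card {w \<in> V. c w < c u}) + int (card {w \<in> V. c u < c w})"
proof -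
  have "{w \<in> nbhd V Kn_edge u. P w} = {w \<in> V. P w}" if "\<not> P u" for P
    using that by (auto simp: nbhd_def Kn_edge_def)
  then show ?thesis
    using assms by (simp add: diffusion_step_def)
qed

lemma diffusion_step_complete_gap:
  assumes "finite V" and u: "u \<in> V" and v: "v \<in> V" and "c u < c v"
  shows "diffusion_step V Kn_edge c v - diffusion_step V Kn_edge c u \<le> c v - c u - 2"
    and "diffusion_step V Kn_edge c v - diffusion_step V Kn_edge c u
           \<ge> c v - c u - 2 * (int (card V) - 1)"
proof -
  let ?Lu = "{w \<in> V. c w < c u}" and ?Lv = "{w \<in> V. c w < c v}"
  let ?Gu = "{w \<in> V. c u < c w}" and ?Gv = "{w \<in> V. c v < c w}"
  have "card ?Lu < card ?Lv"
    using assms by (intro psubset_card_mono) auto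
  moreover have "card ?Gv < card ?Gu"
    using assms by (intro psubset_card_mono) auto
  moreover have "card ?Lv \<le> card (V - {v})"
    using assms by (intro card_mono) auto
  moreover have "card ?Gu \<le> card (V - {u})"
    using assms by (intro card_mono) auto
  moreover have "card V \<ge> 1"
    using assms card_0_eq by fastforce
  ultimately show "diffusion_step V Kn_edge c v - diffusion_step V Kn_edge c u \<le> c v - c u - 2"
    and "diffusion_step V Kn_edge c v - diffusion_step V Kn_edge c u
           \<ge> c v - c u - 2 * (int (card V) - 1)"
    using u v unfolding diffusion_step_complete[OF u] diffusion_step_complete[OF v]
    by (simp_all add: card_Diff_singleton)
qed

lemma spread_le_diffusion_step_complete:
  assumes "finite V" and "2 * (int (card V) - 1) \<le> D" and "spread_le V c D"
  shows "spread_le V (diffusion_step V Kn_edge c) D"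
  unfolding spread_le_def
proof (intro ballI)
  fix u v assume u: "u \<in> V" and v: "v \<in> V"
  have "\<bar>c u - c v\<bar> \<le> D"
    using assms(3) u v unfolding spread_le_def by blast
  consider "c u < c v" | "c u = c v" | "c v < c u" by linarith
  then show "\<bar>diffusion_step V Kn_edge c u - diffusion_step V Kn_edge c v\<bar> \<le> D"
  proof cases
    case 1
    then show ?thesis
      using diffusion_step_complete_gap[OF assms(1) u v 1] \<open>\<bar>c u - c v\<bar> \<le> D\<close> assms(2)
      by linarith
  next
    case 2
    then show ?thesis
      using \<open>\<bar>c u - c v\<bar> \<le> D\<close> u v by (simp add: diffusion_step_complete)
  next
    case 3
    then show ?thesis
      using diffusion_step_complete_gap[OF assms(1) v u 3] \<open>\<bar>c u - c v\<bar> \<le> D\<close> assms(2)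
      by linarith
  qed
qed

lemma abs_le_sum_if_spread_le:
  assumes "finite V" and "spread_le V c D" and "u \<in> V"
  shows "\<bar>c u\<bar> \<le> \<bar>\<Sum>w\<in>V. c w\<bar> + int (card V) * D"
proof -
  have "\<bar>int (card V) * c u - (\<Sum>w\<in>V. c w)\<bar> = \<bar>\<Sum>w\<in>V. c u - c w\<bar>"
    by (simp add: sum_subtractf)
  also have "\<dots> \<le> (\<Sum>w\<in>V. \<bar>c u - c w\<bar>)"
    by (rule sum_abs)
  also have "\<dots> \<le> (\<Sum>w\<in>V. D)"
    using assms(2,3) unfolding spread_le_def by (intro sum_mono) blast
  finally have "\<bar>int (card V) * c u - (\<Sum>w\<in>V. c w)\<bar> \<le> int (card V) * D"
    by simp
  moreover have "1 \<le> int (card V)"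
    using assms(1,3) card_0_eq by fastforce
  then have "\<bar>c u\<bar> \<le> \<bar>int (card V) * c u\<bar>"
    using mult_right_mono[of 1 "int (card V)" "\<bar>c u\<bar>"] by (simp add: abs_mult)
  ultimately show ?thesis
    by linarith
qed

lemma bounded_configurations_recur:
  fixes c :: "nat \<Rightarrow> 'a \<Rightarrow> int"
  assumes "finite V" and "\<And>t u. u \<in> V \<Longrightarrow> \<bar>c t u\<bar> \<le> B"
  shows "\<exists>t p. p \<ge> 1 \<and> (\<forall>v\<in>V. c (t + p) v = c t v)"
proof -
  define f where "f t = restrict (c t) V" for t
  have "c t u \<in> {-B..B}" if "u \<in> V" for t u
    using assms(2)[OF that, of t] by (auto simp: abs_le_iff)
  then have "range f \<subseteq> PiE V (\<lambda>_. {-B..B})"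
    by (auto simp: f_def)
  moreover have "finite (PiE V (\<lambda>_. {-B..B}))"
    using assms(1) by (intro finite_PiE) auto
  ultimately have "\<not> inj f"
    using finite_subset finite_imageD infinite_UNIV_nat by blast
  then obtain i j where "f i = f j" and "i < j"
    unfolding inj_def by (metis linorder_neqE_nat)
  moreover have "c j v = c i v" if "v \<in> V" for v
    using fun_cong[OF \<open>f i = f j\<close>, of v] that by (simp add: f_def)
  ultimately show ?thesis
    by (intro exI[of _ i] exI[of _ "j - i"]) simp
qed

theorem theorem12:
  fixes n :: nat and c0 :: "nat \<Rightarrow> int"
  assumes "n \<ge> 2"
  shows "\<exists>t p. p \<ge> 1 \<and>
    (\<forall>v \<in> Kn_vertices n. diffusion (Kn_vertices n) Kn_edge c0 (t + p) v
                          = diffusion (Kn_vertices n) Kn_edge c0 t v)"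
proof -
  let ?V = "Kn_vertices n"
  let ?c = "diffusion ?V Kn_edge c0"
  have fin: "finite ?V" and card: "card ?V = n"
    by (simp_all add: Kn_vertices_def)
  have graph: "simple_graph ?V Kn_edge"
    by (simp add: simple_graph_def Kn_vertices_def Kn_edge_def)
  define S where "S = (\<Sum>w\<in>?V. \<bar>c0 w\<bar>)"
  define D where "D = 2 * int n + 2 * S"
  have S_bound: "\<bar>c0 w\<bar> \<le> S" if "w \<in> ?V" for w
    unfolding S_def using fin that by (intro member_le_sum) auto
  have spread0: "spread_le ?V c0 D"
    unfolding spread_le_def D_def
    using S_bound abs_triangle_ineq4[of "c0 u" "c0 v" for u v] by (smt (verit) of_nat_0_le_iff)
  have "0 \<le> S"
    unfolding S_def by (simp add: sum_nonneg)
  then have D_ge: "2 * (int (card ?V) - 1) \<le> D"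
    by (simp add: D_def card)
  have invariant: "spread_le ?V (?c t) D \<and> (\<Sum>w\<in>?V. ?c t w) = (\<Sum>w\<in>?V. c0 w)" for t
    using spread0 D_ge by (induction t)
      (simp_all add: diffusion_def[of _ _ _ 0] diffusion_Suc fin
        spread_le_diffusion_step_complete sum_diffusion_step[OF graph])
  show ?thesis
    using fin abs_le_sum_if_spread_le[OF fin conjunct1[OF invariant]] invariant
    by (intro bounded_configurations_recur[where B = "\<bar>\<Sum>w\<in>?V. c0 w\<bar> + int (card ?V) * D"])
      simp_all
qed

end
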